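(* If $(w,w')$ is a pair of infinite words over $A_q$ accepted by $\mathcal{D}_{p/q}$ (i.e. the run of $\mathcal{D}_{p/q}$ from state $0$ on input $w$ exists and produces output $w'$), then $\widehat{\mathcal{T}_{p/q}}$ accepts the word $\mathrm{m}(w')\ominus w$.
   Context: Let $p>q>1$ be coprime integers, $A_q=\{0,\dots,q-1\}$ and $B=\{p-(2q-1),\dots,p-1\}$. For $n\in\mathbb{N}$ and $a\in\mathbb{Z}$, let $\tau(n,a)=\frac{np+a}{q}$, defined only when $q$ divides $np+a$. For $a\in B$ let $\omega(a)=\{(b,c)\in A_q\times A_q : c-b=a-(p-q)\}$. The transducer $\mathcal{D}_{p/q}$ has state set $\mathbb{N}$, input and output alphabet $A_q$, initial state $0$, and a transition $n\xrightarrow{b|c}\tau(n,a)$ (input $b$, output $c$) for every $n\in\mathbb{N}$, $a\in B$ with $\tau(n,a)$ defined, and $(b,c)\in\omega(a)$; no other transitions. Let $\widehat{\mathcal{T}_{p/q}}$ be the deterministic automaton with state set $\mathbb{N}$, alphabet $B$, initial state $0$, and transitions $n\xrightarrow{a}\tau(n,a)$ for $a\in B$ with $\tau(n,a)$ defined; an infinite word is accepted if each finite prefix labels a path from $0$. The map $\mathrm{m}:A_q\to\{p-q,\dots,p-1\}$ sends $a$ to the greatest integer strictly smaller than $p$ that is congruent to $a+p$ modulo $q$; it is extended letter-wise to infinite words. The operation $\ominus$ denotes letter-wise subtraction of infinite words. *)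

theory Defs
  imports "HOL-Number_Theory.Cong"
begin

definition Aq :: "int \<Rightarrow> int set" where
  "Aq q = {0..q-1}"

definition Bset :: "int \<Rightarrow> int \<Rightarrow> int set" where
  "Bset p q = {p-(2*q-1)..p-1}"

definition omega :: "int \<Rightarrow> int \<Rightarrow> int \<Rightarrow> (int \<times> int) set" where
  "omega p q a = {(b,c). b \<in> Aq q \<and> c \<in> Aq q \<and> c - b = a - (p - q)}"

definition tau :: "int \<Rightarrow> int \<Rightarrow> nat \<Rightarrow> int \<Rightarrow> nat option" where
  "tau p q n a = (if q dvd (int n * p + a) \<and> int n * p + a \<ge> 0
                  then Some (nat ((int n * p + a) div q)) else None)"

definition D_trans :: "int \<Rightarrow> int \<Rightarrow> nat \<Rightarrow> int \<Rightarrow> int \<Rightarrow> nat \<Rightarrow> bool" where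
  "D_trans p q n b c n' \<longleftrightarrow>
     (\<exists>a \<in> Bset p q. (b, c) \<in> omega p q a \<and> tau p q n a = Some n')"

definition D_accepts :: "int \<Rightarrow> int \<Rightarrow> (nat \<Rightarrow> int) \<Rightarrow> (nat \<Rightarrow> int) \<Rightarrow> bool" where
  "D_accepts p q w w' \<longleftrightarrow>
     (\<exists>r :: nat \<Rightarrow> nat. r 0 = 0 \<and> (\<forall>i. D_trans p q (r i) (w i) (w' i) (r (Suc i))))"

definition That_delta :: "int \<Rightarrow> int \<Rightarrow> nat \<Rightarrow> int \<Rightarrow> nat option" where
  "That_delta p q n a = (if a \<in> Bset p q then tau p q n a else None)"

fun That_run :: "int \<Rightarrow> int \<Rightarrow> (nat \<Rightarrow> int) \<Rightarrow> nat \<Rightarrow> nat option" where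
  "That_run p q v 0 = Some 0"
| "That_run p q v (Suc k) = Option.bind (That_run p q v k) (\<lambda>n. That_delta p q n (v k))"

definition That_accepts :: "int \<Rightarrow> int \<Rightarrow> (nat \<Rightarrow> int) \<Rightarrow> bool" where
  "That_accepts p q v \<longleftrightarrow> (\<forall>k. That_run p q v k \<noteq> None)"

definition mmap :: "int \<Rightarrow> int \<Rightarrow> int \<Rightarrow> int" where
  "mmap p q a = (GREATEST x. x < p \<and> [x = a + p] (mod q))"

end

theory Submission
  imports Defs
begin

text \<open>For an output letter \<open>c \<in> A\<^sub>q\<close> we have \<open>m(c) = c + p - q\<close>. Hence, if a transition
  of \<open>D\<^sub>p\<^sub>/\<^sub>q\<close> reads \<open>b\<close> and writes \<open>c\<close> via the letter \<open>a \<in> B\<close>, then \<open>m(c) - b = a\<close> by the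
  defining equation of \<open>\<omega>(a)\<close>, so the run of \<open>D\<^sub>p\<^sub>/\<^sub>q\<close> is, state by state, a run of the
  automaton on \<open>m(w') \<ominus> w\<close>.\<close>

lemma mmap_Aq:
  fixes p q c :: int
  assumes "q > 0" and "c \<in> Aq q"
  shows "mmap p q c = c + p - q"
  unfolding mmap_def
proof (rule Greatest_equality)
  show "c + p - q < p \<and> [c + p - q = c + p] (mod q)"
    using assms by (auto simp: Aq_def cong_iff_dvd_diff)
next
  fix y
  assume "y < p \<and> [y = c + p] (mod q)"
  then obtain j where "y < p" and "y - (c + p) = q * j"
    by (auto simp: cong_iff_dvd_diff elim: dvdE)
  then obtain k where k: "y = c + p - q + q * k"
    by (metis add.commute diff_add_cancel diff_diff_eq2 distrib_left mult.right_neutral)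
  have "k < 1"
  proof (rule ccontr)
    assume "\<not> k < 1"
    then have "q * k \<ge> q" using \<open>q > 0\<close> by simp
    with k \<open>y < p\<close> \<open>c \<in> Aq q\<close> show False by (simp add: Aq_def)
  qed
  then show "y \<le> c + p - q"
    using k \<open>q > 0\<close> by (simp add: mult_le_0_iff)
qed

lemma D_trans_imp_That_delta:
  assumes "q > 0" and "D_trans p q n b c n'"
  shows "That_delta p q n (mmap p q c - b) = Some n'"
proof -
  obtain a where "a \<in> Bset p q" and bc: "(b, c) \<in> omega p q a" and "tau p q n a = Some n'"
    using assms(2) unfolding D_trans_def by blast
  moreover have "mmap p q c - b = a"
    using bc mmap_Aq[OF \<open>q > 0\<close>, of c p] by (auto simp: omega_def)
  ultimately show ?thesis by (simp add: That_delta_def)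
qed

lemma That_run_eq_Some:
  assumes "r 0 = 0" and "\<And>i. That_delta p q (r i) (v i) = Some (r (Suc i))"
  shows "That_run p q v k = Some (r k)"
  by (induction k) (use assms in auto)

theorem mainTheorem7:
  fixes p q :: int and w w' :: "nat \<Rightarrow> int"
  assumes "p > q" and "q > 1" and "coprime p q"
    and "\<forall>i. w i \<in> Aq q" and "\<forall>i. w' i \<in> Aq q"
    and "D_accepts p q w w'"
  shows "That_accepts p q (\<lambda>i. mmap p q (w' i) - w i)"
proof -
  obtain r where "r 0 = 0" and "\<And>i. D_trans p q (r i) (w i) (w' i) (r (Suc i))"
    using assms(6) unfolding D_accepts_def by blast
  then have "That_run p q (\<lambda>i. mmap p q (w' i) - w i) k = Some (r k)" for k
    using \<open>q > 1\<close> by (intro That_run_eq_Some) (auto intro: D_trans_imp_That_delta)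
  then show ?thesis
    unfolding That_accepts_def by simp
qed

end
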